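(* Let $k\in\mathbb{N}$ be fixed. Then the function $\beta\mapsto\delta(k,\beta)$ is strictly increasing on $[1,+\infty)$. Moreover $\delta(k,1)<0$ and $\delta(k,\sqrt2)>0$.
   Context: $\mathbb{N}=\{0,1,2,\dots\}$. For $t\ge 0$ let $q(t)=\lfloor t+1\rfloor/2$ if $\lfloor t\rfloor$ is odd and $q(t)=t-\lfloor t\rfloor/2$ if $\lfloor t\rfloor$ is even, and $p(t)=t+1-q(t)$. For $\beta\ge1$ let $\hat\sigma(t,\beta)\in(0,1)$ be the unique solution $\sigma$ of $\frac{p(t)\sigma}{\sqrt{1-\sigma^2}}+\frac{q(t)\sigma}{\sqrt{\beta^2-\sigma^2}}=1$, and $l(t,\beta)=\frac{p(t)}{\sqrt{1-\hat\sigma^2}}+\frac{\beta^2q(t)}{\sqrt{\beta^2-\hat\sigma^2}}-t-\sqrt2$. For $k\in\mathbb{N}$, $\delta(k,\beta)=l(2k+2,\beta)-l(2k,\beta)$. *)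

theory Defs
  imports "HOL-Analysis.Analysis"
begin

definition qf :: "real \<Rightarrow> real" where
  "qf t = (if odd \<lfloor>t\<rfloor> then real_of_int \<lfloor>t + 1\<rfloor> / 2 else t - real_of_int \<lfloor>t\<rfloor> / 2)"

definition pf :: "real \<Rightarrow> real" where
  "pf t = t + 1 - qf t"

definition sigma_hat :: "real \<Rightarrow> real \<Rightarrow> real" where
  "sigma_hat t \<beta> = (THE \<sigma>. 0 < \<sigma> \<and> \<sigma> < 1 \<and>
      pf t * \<sigma> / sqrt (1 - \<sigma>\<^sup>2) + qf t * \<sigma> / sqrt (\<beta>\<^sup>2 - \<sigma>\<^sup>2) = 1)"

definition lf :: "real \<Rightarrow> real \<Rightarrow> real" where
  "lf t \<beta> = pf t / sqrt (1 - (sigma_hat t \<beta>)\<^sup>2)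
      + \<beta>\<^sup>2 * qf t / sqrt (\<beta>\<^sup>2 - (sigma_hat t \<beta>)\<^sup>2) - t - sqrt 2"

definition delta :: "nat \<Rightarrow> real \<Rightarrow> real" where
  "delta k \<beta> = lf (2 * real k + 2) \<beta> - lf (2 * real k) \<beta>"

end

theory Submission
  imports Defs
begin

text \<open>
  For fixed \<open>p, q\<close> the function \<open>F(x) = p\<surd>(1 - x\<^sup>2) + q\<surd>(\<beta>\<^sup>2 - x\<^sup>2) + x\<close> is concave on
  \<open>[0,1]\<close>, and the equation defining \<open>\<sigma>\<close> says exactly \<open>F'(\<sigma>) = 0\<close>; a short computation shows
  that \<open>l(t,\<beta>) + t + \<surd>2\<close> is the maximum of \<open>F\<close> with \<open>p = p(t), q = q(t)\<close>. For even \<open>t = 2k\<close>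
  these are \<open>p = k + 1, q = k\<close>, so \<open>\<delta>(k,\<beta>)\<close> is a difference of two such maxima. Comparing
  each maximum with the value of \<open>F\<close> at the other's maximiser bounds the increments in \<open>\<beta>\<close>
  (an envelope argument), and the equation for \<open>\<sigma>\<close> forces the maximiser to be small enough
  that the increment of the larger problem wins. At \<open>\<beta> = 1\<close> the maximum is
  \<open>\<surd>((p + q)\<^sup>2 + 1)\<close> by Cauchy--Schwarz, and at \<open>\<beta> = \<surd>2\<close> explicit points of evaluation suffice.
\<close>

definition objective :: "real \<Rightarrow> real \<Rightarrow> real \<Rightarrow> real \<Rightarrow> real" where
  "objective p q \<beta> x = p * sqrt (1 - x\<^sup>2) + q * sqrt (\<beta>\<^sup>2 - x\<^sup>2) + x"

text \<open>On \<open>[0,1)\<close> the derivative of \<open>objective p q \<beta>\<close> is \<open>1 - sigma_lhs p q \<beta>\<close>.\<close>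

definition sigma_lhs :: "real \<Rightarrow> real \<Rightarrow> real \<Rightarrow> real \<Rightarrow> real" where
  "sigma_lhs p q \<beta> \<sigma> = p * \<sigma> / sqrt (1 - \<sigma>\<^sup>2) + q * \<sigma> / sqrt (\<beta>\<^sup>2 - \<sigma>\<^sup>2)"

definition critical_point :: "real \<Rightarrow> real \<Rightarrow> real \<Rightarrow> real" where
  "critical_point p q \<beta> = (THE \<sigma>. 0 < \<sigma> \<and> \<sigma> < 1 \<and> sigma_lhs p q \<beta> \<sigma> = 1)"

definition max_value :: "real \<Rightarrow> real \<Rightarrow> real \<Rightarrow> real" where
  "max_value p q \<beta> = objective p q \<beta> (critical_point p q \<beta>)"

lemma square_less_square: "0 \<le> (x::real) \<Longrightarrow> x < c \<Longrightarrow> x\<^sup>2 < c\<^sup>2"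
  by (simp add: power_strict_mono)

lemma sqrt_diff_square_le_tangent:
  fixes c x s :: real
  assumes "0 \<le> x" "x \<le> c" "0 \<le> s" "s < c"
  shows "sqrt (c\<^sup>2 - x\<^sup>2) \<le> sqrt (c\<^sup>2 - s\<^sup>2) - s * (x - s) / sqrt (c\<^sup>2 - s\<^sup>2)"
proof -
  define R where "R = sqrt (c\<^sup>2 - s\<^sup>2)"
  have "c\<^sup>2 - s\<^sup>2 > 0" using assms by (simp add: power2_eq_square mult_strict_mono)
  then have R: "R > 0" "R\<^sup>2 = c\<^sup>2 - s\<^sup>2" unfolding R_def by simp_all
  have "(c\<^sup>2 - s * x)\<^sup>2 - (c\<^sup>2 - x\<^sup>2) * (c\<^sup>2 - s\<^sup>2) = c\<^sup>2 * (x - s)\<^sup>2"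
    by (simp add: power2_eq_square algebra_simps)
  then have "(c\<^sup>2 - x\<^sup>2) * (c\<^sup>2 - s\<^sup>2) \<le> (c\<^sup>2 - s * x)\<^sup>2"
    by (smt (verit) zero_le_power2 mult_nonneg_nonneg)
  moreover have "c\<^sup>2 - s * x \<ge> 0" using assms by (smt (verit) mult_mono power2_eq_square)
  ultimately have "sqrt (c\<^sup>2 - x\<^sup>2) * R \<le> c\<^sup>2 - s * x"
    unfolding R_def by (metis real_sqrt_le_mono real_sqrt_abs abs_of_nonneg real_sqrt_mult)
  then have "sqrt (c\<^sup>2 - x\<^sup>2) \<le> (c\<^sup>2 - s * x) / R" using R by (simp add: field_simps)
  also have "\<dots> = R - s * (x - s) / R" using R by (simp add: field_simps power2_eq_square)
  finally show ?thesis unfolding R_def .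
qed

lemma objective_le_at_critical:
  assumes "p \<ge> 0" "q \<ge> 0" "\<beta> \<ge> 1" "0 \<le> s" "s < 1" "sigma_lhs p q \<beta> s = 1"
    and "0 \<le> x" "x \<le> 1"
  shows "objective p q \<beta> x \<le> objective p q \<beta> s"
proof -
  define R1 where "R1 = sqrt (1 - s\<^sup>2)"
  define R2 where "R2 = sqrt (\<beta>\<^sup>2 - s\<^sup>2)"
  have "sqrt (1\<^sup>2 - x\<^sup>2) \<le> sqrt (1\<^sup>2 - s\<^sup>2) - s * (x - s) / sqrt (1\<^sup>2 - s\<^sup>2)"
    by (rule sqrt_diff_square_le_tangent) (use assms in auto)
  moreover have "sqrt (\<beta>\<^sup>2 - x\<^sup>2) \<le> R2 - s * (x - s) / R2"
    unfolding R2_def by (rule sqrt_diff_square_le_tangent) (use assms in auto)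
  ultimately have "objective p q \<beta> x \<le> p * (R1 - s * (x - s) / R1) + q * (R2 - s * (x - s) / R2) + x"
    unfolding objective_def R1_def using assms(1,2) by (auto intro!: add_mono mult_left_mono)
  also have "\<dots> = objective p q \<beta> s + (x - s) * (1 - sigma_lhs p q \<beta> s)"
    unfolding objective_def sigma_lhs_def R1_def R2_def by (simp add: algebra_simps)
  finally show ?thesis using assms(6) by simp
qed

lemma objective_at_critical:
  assumes "\<beta> \<ge> 1" "0 \<le> s" "s < 1" "sigma_lhs p q \<beta> s = 1"
  shows "p / sqrt (1 - s\<^sup>2) + \<beta>\<^sup>2 * q / sqrt (\<beta>\<^sup>2 - s\<^sup>2) = objective p q \<beta> s"
proof -
  define R1 where "R1 = sqrt (1 - s\<^sup>2)"
  define R2 where "R2 = sqrt (\<beta>\<^sup>2 - s\<^sup>2)"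
  have R1: "R1 > 0" "R1\<^sup>2 = 1 - s\<^sup>2"
    using square_less_square[of s 1] assms unfolding R1_def by auto
  have R2: "R2 > 0" "R2\<^sup>2 = \<beta>\<^sup>2 - s\<^sup>2"
    using square_less_square[of s \<beta>] assms unfolding R2_def by auto
  have "objective p q \<beta> s = p * R1 + q * R2 + s * sigma_lhs p q \<beta> s"
    using assms(4) unfolding objective_def R1_def R2_def by simp
  also have "\<dots> = p * (R1\<^sup>2 + s\<^sup>2) / R1 + q * (R2\<^sup>2 + s\<^sup>2) / R2"
    unfolding sigma_lhs_def R1_def[symmetric] R2_def[symmetric] using R1(1) R2(1)
    by (simp add: field_simps power2_eq_square)
  also have "\<dots> = p / R1 + \<beta>\<^sup>2 * q / R2" using R1 R2 by simp
  finally show ?thesis unfolding R1_def R2_def by simp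
qed

lemma divide_sqrt_diff_square_strict_mono:
  fixes c x y :: real
  assumes "c \<ge> 1" "0 \<le> x" "x < y" "y < 1"
  shows "x / sqrt (c\<^sup>2 - x\<^sup>2) < y / sqrt (c\<^sup>2 - y\<^sup>2)"
proof -
  have "y\<^sup>2 < c\<^sup>2" "x\<^sup>2 < y\<^sup>2" using square_less_square[of y c] square_less_square[of x y] assms
    by simp_all
  then have pos: "sqrt (c\<^sup>2 - y\<^sup>2) > 0" "sqrt (c\<^sup>2 - x\<^sup>2) > 0"
    and le: "sqrt (c\<^sup>2 - y\<^sup>2) \<le> sqrt (c\<^sup>2 - x\<^sup>2)" by simp_all
  have "x / sqrt (c\<^sup>2 - x\<^sup>2) \<le> x / sqrt (c\<^sup>2 - y\<^sup>2)"
    using pos le assms by (intro divide_left_mono) auto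
  also have "\<dots> < y / sqrt (c\<^sup>2 - y\<^sup>2)" using pos assms by (intro divide_strict_right_mono) auto
  finally show ?thesis .
qed

lemma sigma_lhs_strict_mono:
  assumes "p > 0" "q \<ge> 0" "\<beta> \<ge> 1" "0 \<le> x" "x < y" "y < 1"
  shows "sigma_lhs p q \<beta> x < sigma_lhs p q \<beta> y"
proof -
  have "x / sqrt (1\<^sup>2 - x\<^sup>2) < y / sqrt (1\<^sup>2 - y\<^sup>2)"
    by (rule divide_sqrt_diff_square_strict_mono) (use assms in auto)
  then have "p * (x / sqrt (1 - x\<^sup>2)) < p * (y / sqrt (1 - y\<^sup>2))"
    using assms(1) by (intro mult_strict_left_mono) auto
  moreover have "x / sqrt (\<beta>\<^sup>2 - x\<^sup>2) < y / sqrt (\<beta>\<^sup>2 - y\<^sup>2)"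
    by (rule divide_sqrt_diff_square_strict_mono) (use assms in auto)
  then have "q * (x / sqrt (\<beta>\<^sup>2 - x\<^sup>2)) \<le> q * (y / sqrt (\<beta>\<^sup>2 - y\<^sup>2))"
    using assms(2) by (intro mult_left_mono) auto
  ultimately show ?thesis unfolding sigma_lhs_def by simp
qed

lemma continuous_on_sigma_lhs:
  assumes "\<beta> \<ge> 1" "a < 1"
  shows "continuous_on {0..a} (sigma_lhs p q \<beta>)"
proof -
  have "1 - x\<^sup>2 > 0 \<and> \<beta>\<^sup>2 - x\<^sup>2 > 0" if "x \<in> {0..a}" for x
    using that assms square_less_square[of x 1] square_less_square[of x \<beta>] by auto
  then show ?thesis unfolding sigma_lhs_def
    by (intro continuous_intros) (auto simp del: atLeastAtMost_iff, force+)
qed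

lemma sigma_lhs_three_quarters_ge:
  assumes "p \<ge> 1" "q \<ge> 0" "\<beta> \<ge> 1"
  shows "sigma_lhs p q \<beta> (3/4) \<ge> 1"
proof -
  have "sqrt (1 - (3/4::real)\<^sup>2) = sqrt 7 / 4" by (simp add: power2_eq_square real_sqrt_divide)
  moreover have "sqrt 7 \<le> 3" using real_sqrt_le_mono[of 7 "3\<^sup>2"] by simp
  ultimately have "1 \<le> (3/4) / sqrt (1 - (3/4::real)\<^sup>2)" by (simp add: field_simps)
  also have "\<dots> \<le> p * (3/4) / sqrt (1 - (3/4::real)\<^sup>2)"
    using mult_right_mono[OF assms(1), of "(3/4) / sqrt (1 - (3/4::real)\<^sup>2)"]
    by (simp add: power2_eq_square)
  finally have "1 \<le> p * (3/4) / sqrt (1 - (3/4::real)\<^sup>2)" .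
  moreover have "\<beta>\<^sup>2 \<ge> 1" using assms(3) by (simp add: one_le_power)
  then have "q * (3/4) / sqrt (\<beta>\<^sup>2 - (3/4)\<^sup>2) \<ge> 0" using assms(2) by (simp add: power2_eq_square)
  ultimately show ?thesis unfolding sigma_lhs_def by linarith
qed

lemma sigma_lhs_eq_one_ex1:
  assumes "p \<ge> 1" "q \<ge> 0" "\<beta> \<ge> 1"
  shows "\<exists>!\<sigma>. 0 < \<sigma> \<and> \<sigma> < 1 \<and> sigma_lhs p q \<beta> \<sigma> = 1"
proof -
  have zero: "sigma_lhs p q \<beta> 0 = 0" unfolding sigma_lhs_def by simp
  obtain s where s: "0 \<le> s" "s \<le> 3/4" "sigma_lhs p q \<beta> s = 1"
    using IVT'[of "sigma_lhs p q \<beta>" 0 1 "3/4"] zero sigma_lhs_three_quarters_ge[OF assms]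
      continuous_on_sigma_lhs[OF assms(3), of "3/4"] by auto
  then have s_sol: "0 < s \<and> s < 1 \<and> sigma_lhs p q \<beta> s = 1"
    using zero by (cases "s = 0") auto
  show ?thesis
  proof (rule ex1I[of _ s])
    fix y assume "0 < y \<and> y < 1 \<and> sigma_lhs p q \<beta> y = 1"
    then show "y = s"
      using sigma_lhs_strict_mono[OF _ assms(2,3), of p y s] sigma_lhs_strict_mono[OF _ assms(2,3), of p s y]
        s_sol assms(1) by (cases y s rule: linorder_cases) auto
  qed (rule s_sol)
qed

lemma critical_point:
  assumes "p \<ge> 1" "q \<ge> 0" "\<beta> \<ge> 1"
  shows "0 < critical_point p q \<beta>" "critical_point p q \<beta> < 1"
    "sigma_lhs p q \<beta> (critical_point p q \<beta>) = 1"
  using theI'[OF sigma_lhs_eq_one_ex1[OF assms]] unfolding critical_point_def by auto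

lemma objective_le_max_value:
  assumes "p \<ge> 1" "q \<ge> 0" "\<beta> \<ge> 1" "0 \<le> x" "x \<le> 1"
  shows "objective p q \<beta> x \<le> max_value p q \<beta>"
  unfolding max_value_def
  by (rule objective_le_at_critical) (use assms critical_point[OF assms(1-3)] in auto)

lemma lf_eq_max_value:
  assumes "pf t \<ge> 1" "qf t \<ge> 0" "\<beta> \<ge> 1"
  shows "lf t \<beta> = max_value (pf t) (qf t) \<beta> - t - sqrt 2"
proof -
  have "sigma_hat t \<beta> = critical_point (pf t) (qf t) \<beta>"
    unfolding sigma_hat_def critical_point_def sigma_lhs_def ..
  then show ?thesis
    using objective_at_critical[of \<beta> "critical_point (pf t) (qf t) \<beta>"] critical_point[OF assms]
    unfolding lf_def max_value_def by (simp add: assms)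
qed

lemma pf_qf_even: "qf (2 * real k) = k" "pf (2 * real k) = k + 1"
proof -
  have floor: "\<lfloor>2 * real k\<rfloor> = 2 * int k"
    by (metis floor_of_int of_int_mult of_int_numeral of_int_of_nat_eq)
  show "qf (2 * real k) = k" unfolding qf_def floor by simp
  then show "pf (2 * real k) = k + 1" unfolding pf_def by simp
qed

lemma delta_eq_max_value:
  assumes "\<beta> \<ge> 1"
  shows "delta k \<beta> = max_value (real k + 2) (real k + 1) \<beta> - max_value (real k + 1) (real k) \<beta> - 2"
proof -
  have "2 * real k + 2 = 2 * real (Suc k)" by simp
  then have "lf (2 * real k + 2) \<beta> = max_value (real k + 2) (real k + 1) \<beta> - (2 * real k + 2) - sqrt 2"
    using lf_eq_max_value[of "2 * real (Suc k)" \<beta>] pf_qf_even[of "Suc k"] assms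
    by (simp add: add.commute)
  moreover have "lf (2 * real k) \<beta> = max_value (real k + 1) (real k) \<beta> - 2 * real k - sqrt 2"
    using lf_eq_max_value[of "2 * real k" \<beta>] pf_qf_even[of k] assms by (simp add: add.commute)
  ultimately show ?thesis unfolding delta_def by simp
qed

lemma critical_point_bound:
  assumes "p \<ge> 1" "q \<ge> 0" "\<beta> \<ge> 1"
  shows "p\<^sup>2 * (critical_point p q \<beta>)\<^sup>2 \<le> 1 - (critical_point p q \<beta>)\<^sup>2"
proof -
  define c where "c = critical_point p q \<beta>"
  have c: "0 < c" "c < 1" "sigma_lhs p q \<beta> c = 1" using critical_point[OF assms] c_def by auto
  have "c\<^sup>2 < 1" "c\<^sup>2 < \<beta>\<^sup>2" using square_less_square[of c 1] square_less_square[of c \<beta>] c assms(3)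
    by simp_all
  then have pos: "sqrt (1 - c\<^sup>2) > 0" and "q * c / sqrt (\<beta>\<^sup>2 - c\<^sup>2) \<ge> 0" using assms(2) c by simp_all
  then have "p * c / sqrt (1 - c\<^sup>2) \<le> 1" using c(3) unfolding sigma_lhs_def by linarith
  then have "p * c \<le> sqrt (1 - c\<^sup>2)" using pos by (simp add: divide_le_eq)
  then have "(p * c)\<^sup>2 \<le> (sqrt (1 - c\<^sup>2))\<^sup>2" using assms(1) c by (intro power_mono) auto
  then show ?thesis using \<open>c\<^sup>2 < 1\<close> unfolding c_def[symmetric] by (simp add: power_mult_distrib)
qed

lemma divide_sqrt_one_minus_square_less:
  fixes k c :: real
  assumes "k \<ge> 0" "0 < c" "c < 1" "(k + 1)\<^sup>2 * c\<^sup>2 \<le> 1 - c\<^sup>2"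
  shows "k / sqrt (1 - c\<^sup>2) < k + 1"
proof -
  define C where "C = sqrt (1 - c\<^sup>2)"
  have "c\<^sup>2 > 0" "c\<^sup>2 < 1" using assms(2,3) square_less_square[of c 1] by simp_all
  then have C: "C > 0" "C\<^sup>2 = 1 - c\<^sup>2" unfolding C_def by simp_all
  have "k < (k + 1) * C"
  proof (rule ccontr)
    assume "\<not> k < (k + 1) * C"
    then have "((k + 1) * C)\<^sup>2 \<le> k\<^sup>2" using C assms(1) by (intro power_mono) auto
    then have "(k + 1)\<^sup>2 * (1 - c\<^sup>2) \<le> k\<^sup>2" using C by (simp add: power_mult_distrib)
    then show False using assms(1,4) \<open>c\<^sup>2 > 0\<close> by (simp add: power2_eq_square algebra_simps)
  qed
  then show ?thesis using C unfolding C_def[symmetric] by (simp add: divide_less_eq)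
qed

lemma sqrt_diff_square_increment_bounds:
  assumes "1 \<le> \<beta>" "\<beta> < \<beta>'" "0 \<le> x" "x < 1"
  shows "\<beta>' - \<beta> \<le> sqrt (\<beta>'\<^sup>2 - x\<^sup>2) - sqrt (\<beta>\<^sup>2 - x\<^sup>2)"
    and "sqrt (\<beta>'\<^sup>2 - x\<^sup>2) - sqrt (\<beta>\<^sup>2 - x\<^sup>2) \<le> (\<beta>' - \<beta>) / sqrt (1 - x\<^sup>2)"
proof -
  define A where "A = sqrt (\<beta>'\<^sup>2 - x\<^sup>2)"
  define B where "B = sqrt (\<beta>\<^sup>2 - x\<^sup>2)"
  have "x\<^sup>2 < \<beta>\<^sup>2" "x\<^sup>2 < \<beta>'\<^sup>2"
    using square_less_square[of x \<beta>] square_less_square[of x \<beta>'] assms by simp_all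
  then have A: "A\<^sup>2 = \<beta>'\<^sup>2 - x\<^sup>2" "A > 0" and B: "B\<^sup>2 = \<beta>\<^sup>2 - x\<^sup>2" "B > 0"
    unfolding A_def B_def by auto
  have rationalised: "A - B = (\<beta>' - \<beta>) * (\<beta>' + \<beta>) / (A + B)"
    using A B by (simp add: field_simps power2_eq_square)
  have "A \<le> \<beta>'" "B \<le> \<beta>" using assms real_sqrt_le_mono[of "\<beta>'\<^sup>2 - x\<^sup>2" "\<beta>'\<^sup>2"]
      real_sqrt_le_mono[of "\<beta>\<^sup>2 - x\<^sup>2" "\<beta>\<^sup>2"] unfolding A_def B_def by auto
  then have "(\<beta>' - \<beta>) * (\<beta>' + \<beta>) / (\<beta>' + \<beta>) \<le> A - B"
    unfolding rationalised using assms A B by (intro divide_left_mono) auto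
  then show "\<beta>' - \<beta> \<le> A - B" using assms by simp
  define C where "C = sqrt (1 - x\<^sup>2)"
  have C: "C > 0" using square_less_square[of x 1] assms unfolding C_def by simp
  have scaled: "g * C \<le> sqrt (g\<^sup>2 - x\<^sup>2)" if "g \<ge> 1" for g
  proof -
    have "g * C = sqrt (g\<^sup>2 * (1 - x\<^sup>2))" unfolding C_def using that by (simp add: real_sqrt_mult)
    also have "\<dots> \<le> sqrt (g\<^sup>2 - x\<^sup>2)"
    proof (rule real_sqrt_le_mono)
      have "1 * x\<^sup>2 \<le> g\<^sup>2 * x\<^sup>2" using that by (intro mult_right_mono) (auto simp: one_le_power)
      then show "g\<^sup>2 * (1 - x\<^sup>2) \<le> g\<^sup>2 - x\<^sup>2" by (simp add: algebra_simps)
    qed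
    finally show ?thesis .
  qed
  have "(\<beta>' + \<beta>) * C \<le> A + B" using scaled[of \<beta>] scaled[of \<beta>'] assms unfolding A_def B_def
    by (simp add: distrib_right)
  then have "A - B \<le> (\<beta>' - \<beta>) * (\<beta>' + \<beta>) / ((\<beta>' + \<beta>) * C)"
    unfolding rationalised using assms C A B by (intro divide_left_mono) auto
  then show "A - B \<le> (\<beta>' - \<beta>) / C" using assms C by simp
qed

lemma objective_diff_beta:
  "objective p q \<beta>' x - objective p q \<beta> x = q * (sqrt (\<beta>'\<^sup>2 - x\<^sup>2) - sqrt (\<beta>\<^sup>2 - x\<^sup>2))"
  unfolding objective_def by (simp add: algebra_simps)

lemma max_value_increment_ge:
  assumes "p \<ge> 1" "q \<ge> 0" "\<beta> \<ge> 1" "\<beta>' \<ge> 1"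
  defines "a \<equiv> critical_point p q \<beta>"
  shows "q * (sqrt (\<beta>'\<^sup>2 - a\<^sup>2) - sqrt (\<beta>\<^sup>2 - a\<^sup>2)) \<le> max_value p q \<beta>' - max_value p q \<beta>"
  using objective_le_max_value[OF assms(1,2,4), of a] critical_point[OF assms(1-3)]
    objective_diff_beta[of p q \<beta>' a \<beta>] unfolding a_def max_value_def by simp

lemma max_value_increment_le:
  assumes "p \<ge> 1" "q \<ge> 0" "\<beta> \<ge> 1" "\<beta>' \<ge> 1"
  defines "c \<equiv> critical_point p q \<beta>'"
  shows "max_value p q \<beta>' - max_value p q \<beta> \<le> q * (sqrt (\<beta>'\<^sup>2 - c\<^sup>2) - sqrt (\<beta>\<^sup>2 - c\<^sup>2))"
  using objective_le_max_value[OF assms(1-3), of c] critical_point[OF assms(1,2,4)]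
    objective_diff_beta[of p q \<beta>' c \<beta>] unfolding c_def max_value_def by simp

lemma max_value_gap_strict_mono:
  fixes n :: real
  assumes "n \<ge> 0" "1 \<le> \<beta>" "\<beta> < \<beta>'"
  shows "max_value (n + 2) (n + 1) \<beta> - max_value (n + 1) n \<beta>
    < max_value (n + 2) (n + 1) \<beta>' - max_value (n + 1) n \<beta>'"
proof -
  define a where "a = critical_point (n + 2) (n + 1) \<beta>"
  define c where "c = critical_point (n + 1) n \<beta>'"
  have a: "0 < a" "a < 1" using critical_point[of "n + 2" "n + 1" \<beta>] assms unfolding a_def by auto
  have c: "0 < c" "c < 1" using critical_point[of "n + 1" n \<beta>'] assms unfolding c_def by auto
  have "(n + 1)\<^sup>2 * c\<^sup>2 \<le> 1 - c\<^sup>2" using critical_point_bound[of "n + 1" n \<beta>'] assms unfolding c_def by simp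
  then have "n / sqrt (1 - c\<^sup>2) < n + 1" using divide_sqrt_one_minus_square_less assms(1) c by simp
  have "max_value (n + 1) n \<beta>' - max_value (n + 1) n \<beta> \<le> n * (sqrt (\<beta>'\<^sup>2 - c\<^sup>2) - sqrt (\<beta>\<^sup>2 - c\<^sup>2))"
    using max_value_increment_le[of "n + 1" n \<beta> \<beta>'] assms unfolding c_def by simp
  also have "\<dots> \<le> n * ((\<beta>' - \<beta>) / sqrt (1 - c\<^sup>2))"
    using sqrt_diff_square_increment_bounds(2)[OF assms(2,3)] c assms(1) by (intro mult_left_mono) auto
  also have "\<dots> = n / sqrt (1 - c\<^sup>2) * (\<beta>' - \<beta>)" by simp
  also have "\<dots> < (n + 1) * (\<beta>' - \<beta>)"
    using \<open>n / sqrt (1 - c\<^sup>2) < n + 1\<close> assms(3) by (intro mult_strict_right_mono) auto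
  also have "\<dots> \<le> (n + 1) * (sqrt (\<beta>'\<^sup>2 - a\<^sup>2) - sqrt (\<beta>\<^sup>2 - a\<^sup>2))"
    using sqrt_diff_square_increment_bounds(1)[OF assms(2,3)] a assms(1) by (intro mult_left_mono) auto
  also have "\<dots> \<le> max_value (n + 2) (n + 1) \<beta>' - max_value (n + 2) (n + 1) \<beta>"
    using max_value_increment_ge[of "n + 2" "n + 1" \<beta> \<beta>'] assms unfolding a_def by simp
  finally show ?thesis by simp
qed

lemma mult_sqrt_one_minus_square_add_le:
  fixes m x :: real
  assumes "m \<ge> 0" "0 \<le> x" "x \<le> 1"
  shows "m * sqrt (1 - x\<^sup>2) + x \<le> sqrt (m\<^sup>2 + 1)"
proof -
  define y where "y = sqrt (1 - x\<^sup>2)"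
  have "x\<^sup>2 \<le> 1" using assms by (simp add: power_le_one)
  then have y: "y\<^sup>2 = 1 - x\<^sup>2" "y \<ge> 0" unfolding y_def by auto
  have "(m * y + x)\<^sup>2 + (m * x - y)\<^sup>2 = (m\<^sup>2 + 1) * (y\<^sup>2 + x\<^sup>2)"
    by (simp add: power2_eq_square algebra_simps)
  then have "(m * y + x)\<^sup>2 + (m * x - y)\<^sup>2 = m\<^sup>2 + 1" using y(1) by simp
  then have "(m * y + x)\<^sup>2 \<le> m\<^sup>2 + 1" using zero_le_power2[of "m * x - y"] by linarith
  then have "sqrt ((m * y + x)\<^sup>2) \<le> sqrt (m\<^sup>2 + 1)" by (rule real_sqrt_le_mono)
  then show ?thesis using y(2) assms unfolding y_def[symmetric] by simp
qed

lemma max_value_at_one: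
  assumes "p \<ge> 1" "q \<ge> 0"
  shows "max_value p q 1 = sqrt ((p + q)\<^sup>2 + 1)"
proof -
  define m where "m = p + q"
  define R where "R = sqrt (m\<^sup>2 + 1)"
  have objective_one: "objective p q 1 x = m * sqrt (1 - x\<^sup>2) + x" for x
    unfolding objective_def m_def by (simp add: distrib_right)
  have m: "m \<ge> 1" using assms unfolding m_def by simp
  have R: "R\<^sup>2 = m\<^sup>2 + 1" "R \<ge> 1" using real_sqrt_le_mono[of 1 "m\<^sup>2 + 1"] unfolding R_def by simp_all
  have "max_value p q 1 \<le> R"
    using mult_sqrt_one_minus_square_add_le[of m "critical_point p q 1"] critical_point[of p q 1] m assms
    unfolding max_value_def objective_one R_def by simp
  moreover have "objective p q 1 (1 / R) = R"
  proof -
    have "(m / R)\<^sup>2 = (R\<^sup>2 - 1) / R\<^sup>2" using R(1) by (simp add: power_divide)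
    moreover have "m\<^sup>2 + 1 \<noteq> 0" by (simp add: add_nonneg_eq_0_iff)
    ultimately have "1 - (1 / R)\<^sup>2 = (m / R)\<^sup>2" using R by (simp add: power_divide field_simps)
    then have "sqrt (1 - (1 / R)\<^sup>2) = m / R" using m R by simp
    then have "objective p q 1 (1 / R) = (m\<^sup>2 + 1) / R"
      unfolding objective_one by (simp add: add_divide_distrib power2_eq_square)
    then show ?thesis using R(2) unfolding R(1)[symmetric] by (simp add: power2_eq_square)
  qed
  moreover have "objective p q 1 (1 / R) \<le> max_value p q 1"
    using objective_le_max_value[of p q 1 "1 / R"] R(2) assms by simp
  ultimately show ?thesis unfolding R_def m_def by simp
qed

lemma sqrt_square_add_one_shift_less: "sqrt ((x + 2)\<^sup>2 + 1) < 2 + sqrt (x\<^sup>2 + 1)"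
proof -
  have "sqrt (x\<^sup>2) < sqrt (x\<^sup>2 + 1)" by (rule real_sqrt_less_mono) simp
  then have gt: "sqrt (x\<^sup>2 + 1) > \<bar>x\<bar>" by simp
  have "(sqrt (x\<^sup>2 + 1))\<^sup>2 = x\<^sup>2 + 1" by simp
  then have "(x + 2)\<^sup>2 + 1 < (2 + sqrt (x\<^sup>2 + 1))\<^sup>2"
    using gt by (simp add: power2_eq_square algebra_simps)
  then have "sqrt ((x + 2)\<^sup>2 + 1) < sqrt ((2 + sqrt (x\<^sup>2 + 1))\<^sup>2)" by (rule real_sqrt_less_mono)
  then show ?thesis using gt by simp
qed

lemma delta_one: "delta k 1 < 0"
  using sqrt_square_add_one_shift_less[of "2 * real k + 1"]
  by (simp add: delta_eq_max_value max_value_at_one algebra_simps)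

lemma sqrt_two_less: "sqrt 2 < (71/50::real)"
proof -
  have "sqrt 2 < sqrt ((71/50)\<^sup>2)" by (rule real_sqrt_less_mono) (simp add: power2_eq_square)
  then show ?thesis by simp
qed

text \<open>For \<open>k = 0\<close> the critical point is not small enough for the argument of the case \<open>k > 0\<close>;
  evaluating at \<open>x = 3/5\<close> works instead.\<close>

lemma delta_zero_sqrt_two: "delta 0 (sqrt 2) > 0"
proof -
  have "max_value 1 0 (sqrt 2) \<le> sqrt (1\<^sup>2 + 1)"
    using mult_sqrt_one_minus_square_add_le[of 1 "critical_point 1 0 (sqrt 2)"]
      critical_point[of 1 0 "sqrt 2"] unfolding max_value_def objective_def by simp
  moreover have "sqrt (1 - (3/5::real)\<^sup>2) = 4/5"
    using real_sqrt_abs[of "4/5::real"] by (simp add: power2_eq_square)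
  moreover have "sqrt ((sqrt 2)\<^sup>2 - (3/5::real)\<^sup>2) \<ge> 32/25"
    by (rule real_le_rsqrt) (simp_all add: power2_eq_square)
  ultimately have "2 * (4/5) + 32/25 + 3/5 - sqrt 2 \<le> max_value 2 1 (sqrt 2) - max_value 1 0 (sqrt 2)"
    using objective_le_max_value[of 2 1 "sqrt 2" "3/5"] unfolding objective_def by simp
  then show ?thesis using delta_eq_max_value[of "sqrt 2" 0] sqrt_two_less by simp
qed

lemma delta_sqrt_two_of_pos:
  assumes "k > 0"
  shows "delta k (sqrt 2) > 0"
proof -
  define c where "c = critical_point (real k + 1) k (sqrt 2)"
  have c: "0 < c" "c < 1" using critical_point[of "real k + 1" k "sqrt 2"] unfolding c_def by auto
  have "(real k + 1)\<^sup>2 * c\<^sup>2 \<le> 1 - c\<^sup>2"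
    using critical_point_bound[of "real k + 1" k "sqrt 2"] unfolding c_def by simp
  moreover have "2\<^sup>2 * c\<^sup>2 \<le> (real k + 1)\<^sup>2 * c\<^sup>2"
    using assms by (intro mult_right_mono power_mono) auto
  ultimately have small: "5 * c\<^sup>2 \<le> 1" by simp
  have "sqrt (1 - c\<^sup>2) \<ge> 89/100"
    by (rule real_le_rsqrt) (use small in \<open>simp add: power2_eq_square\<close>)
  moreover have "sqrt (2 - c\<^sup>2) \<ge> 67/50"
    by (rule real_le_rsqrt) (use small in \<open>simp add: power2_eq_square\<close>)
  moreover have "objective (real k + 2) (real k + 1) (sqrt 2) c
      = max_value (real k + 1) k (sqrt 2) + sqrt (1 - c\<^sup>2) + sqrt (2 - c\<^sup>2)"
    unfolding max_value_def objective_def c_def[symmetric] by (simp add: algebra_simps)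
  ultimately show ?thesis
    using objective_le_max_value[of "real k + 2" "real k + 1" "sqrt 2" c] c
      delta_eq_max_value[of "sqrt 2" k] by simp
qed

theorem lemma3p10:
  fixes k :: nat
  shows "strict_mono_on {1..} (delta k) \<and> delta k 1 < 0 \<and> delta k (sqrt 2) > 0"
proof (intro conjI)
  show "strict_mono_on {1..} (delta k)"
  proof (rule strict_mono_onI)
    fix \<beta> \<beta>' :: real
    assume "\<beta> \<in> {1..}" "\<beta>' \<in> {1..}" "\<beta> < \<beta>'"
    then show "delta k \<beta> < delta k \<beta>'"
      using max_value_gap_strict_mono[of "real k" \<beta> \<beta>'] by (simp add: delta_eq_max_value)
  qed
  show "delta k 1 < 0" by (rule delta_one)
  show "delta k (sqrt 2) > 0"
    using delta_zero_sqrt_two delta_sqrt_two_of_pos by (cases "k = 0") auto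
qed

end
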